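(* There is an absolute constant $C$ such that for every odd prime $p$ and every integer $n\ge2$, if $X$ is uniform on $\{0,1\}^{n-1}$, then $$\mathbb{E}_X\big[q_p(|X|)\big]\le\tfrac12-\tfrac1\pi+\tfrac1{2p}+Cp^{3/2}e^{-n/p^2},$$ where for an integer $k$, $q_p(k)=\sin^2\!\big(-\tfrac\pi4+\tfrac{\pi}{p}k\big)$ if $(k\bmod p)<p/2$ and $q_p(k)=\cos^2\!\big(-\tfrac\pi4+\tfrac{\pi}{p}k\big)$ otherwise.
   Context: $|X|$ is the Hamming weight of $X$ and $k\bmod p\in\{0,\dots,p-1\}$. (Equivalently, $q_p(|x|)$ is the probability that a bit $Y_x$ with $\Pr[Y_x=\mathrm{parity}(x)]=\cos^2(-\pi/4+\pi|x|/p)$ differs from $\mathrm{majmod}_p(x)\oplus\mathrm{parity}(x)$.) *)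

theory Defs
  imports "HOL-Analysis.Analysis" "HOL-Library.FuncSet"
begin

definition q_p :: "nat \<Rightarrow> int \<Rightarrow> real" where
  "q_p p k = (if real_of_int (k mod int p) < real p / 2
              then (sin (- pi/4 + pi / real p * real_of_int k))\<^sup>2
              else (cos (- pi/4 + pi / real p * real_of_int k))\<^sup>2)"

definition hamming_weight :: "nat \<Rightarrow> (nat \<Rightarrow> nat) \<Rightarrow> nat" where
  "hamming_weight m x = card {i \<in> {0..<m}. x i = 1}"

definition cube :: "nat \<Rightarrow> (nat \<Rightarrow> nat) set" where
  "cube m = ({0..<m} \<rightarrow>\<^sub>E {0, 1})"

definition unif_cube_expectation :: "nat \<Rightarrow> ((nat \<Rightarrow> nat) \<Rightarrow> real) \<Rightarrow> real" where
  "unif_cube_expectation m f = (\<Sum>x\<in>cube m. f x) / real (card (cube m))"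

end

theory Submission
  imports Defs "HOL-Number_Theory.Cong"
begin

text \<open>
  On residues \<open>r < p\<close> one has \<open>q_p p r = (1 - \<bar>sin (2\<pi>r/p)\<bar>) / 2\<close>; for odd \<open>p\<close> the map
  \<open>r \<mapsto> 2r mod p\<close> permutes the residues, so the average of \<open>q_p p\<close> over a period is
  \<open>1/2 - (\<Sum>k<p. sin (\<pi>k/p)) / (2p)\<close>, and the sine sum telescopes to
  \<open>cot (\<pi>/(2p)) \<ge> 2p/\<pi> - 1\<close>. The Hamming weight of a uniform point of \<open>{0,1}\<^sup>m\<close> is binomial,
  and filtering the binomial sum of the \<open>p\<close>-periodic function \<open>q_p p\<close> by \<open>p\<close>-th roots of unity
  \<open>\<omega>\<close> gives this average plus error terms weighted by \<open>((1 + \<omega>\<^sup>j) / 2)\<^sup>m\<close>, \<open>0 < j < p\<close>, each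
  of modulus at most \<open>cos (\<pi>/p)\<^sup>m \<le> exp (- m/p\<^sup>2)\<close>.
\<close>

section \<open>The function q_p on a period\<close>

lemma sin_add_of_nat_mult_pi: "sin (x + real d * pi) = (-1) ^ d * sin x"
  by (simp add: sin_add)

lemma cos_add_of_nat_mult_pi: "cos (x + real d * pi) = (-1) ^ d * cos x"
  by (simp add: cos_add)

lemma q_p_mod:
  assumes "p > 0"
  shows "q_p p (int k) = q_p p (int (k mod p))"
proof -
  have k: "real k = real (k mod p) + real (k div p) * real p"
    by (metis div_mult_mod_eq of_nat_add of_nat_mult add.commute)
  have shift: "- pi/4 + pi / real p * real k
      = (- pi/4 + pi / real p * real (k mod p)) + real (k div p) * pi"
    using assms by (simp add: k field_simps)
  have sign: "((-1::real) ^ d)\<^sup>2 = 1" for d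
    by (simp add: power_mult[symmetric] mult.commute[of d])
  have "(sin (- pi/4 + pi / real p * real k))\<^sup>2 = (sin (- pi/4 + pi / real p * real (k mod p)))\<^sup>2"
    "(cos (- pi/4 + pi / real p * real k))\<^sup>2 = (cos (- pi/4 + pi / real p * real (k mod p)))\<^sup>2"
    unfolding shift sin_add_of_nat_mult_pi cos_add_of_nat_mult_pi
    by (simp_all add: power_mult_distrib sign)
  then show ?thesis
    unfolding q_p_def of_int_of_nat_eq zmod_int[symmetric] by (simp add: zmod_int)
qed

lemma q_p_eq_abs_sin:
  assumes "r < p"
  shows "q_p p (int r) = (1 - \<bar>sin (2 * pi * real r / real p)\<bar>) / 2"
proof -
  have p: "real p > 0" using assms by simp
  define a where "a = 2 * pi * real r / real p"
  have a_range: "0 \<le> a" "a < 2 * pi" using assms p by (auto simp: a_def field_simps)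
  have double: "2 * (- pi/4 + pi / real p * real r) = a - pi/2"
    using p by (simp add: a_def field_simps)
  have "cos (a - pi/2) = sin a" by (simp add: cos_diff)
  then have sin2: "(sin (- pi/4 + pi / real p * real r))\<^sup>2 = (1 - sin a) / 2"
    and cos2: "(cos (- pi/4 + pi / real p * real r))\<^sup>2 = (1 + sin a) / 2"
    using cos_double_sin[of "- pi/4 + pi / real p * real r"]
      cos_double_cos[of "- pi/4 + pi / real p * real r"] double by simp_all
  have mod: "int r mod int p = int r" using assms by simp
  show ?thesis
  proof (cases "real r < real p / 2")
    case True
    then have "a \<le> pi" using p by (simp add: a_def field_simps)
    then have "sin a \<ge> 0" using a_range sin_ge_zero by blast
    then show ?thesis unfolding q_p_def mod using True sin2 by (simp add: a_def)
  next
    case False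
    then have "a \<ge> pi" using p by (simp add: a_def field_simps)
    then have "sin (a - pi) \<ge> 0" using a_range sin_ge_zero[of "a - pi"] by simp
    then have "sin a \<le> 0" by (simp add: sin_diff)
    then show ?thesis unfolding q_p_def mod using False cos2 by (simp add: a_def)
  qed
qed

lemma q_p_nonneg: "0 \<le> q_p p k"
  and q_p_le_one: "q_p p k \<le> 1"
  unfolding q_p_def by (auto simp: abs_square_le_1)

section \<open>The average of q_p over a period\<close>

lemma sum_sin_mult_sin_telescope:
  "(\<Sum>k<N. 2 * sin (x/2) * sin (real k * x)) = cos (x/2) - cos ((real N - 1/2) * x)"
proof (induction N)
  case 0
  then show ?case by simp
next
  case (Suc N)
  have "(real N - 1/2) * x = real N * x - x/2" "(real (Suc N) - 1/2) * x = real N * x + x/2"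
    by (simp_all add: algebra_simps)
  then have "2 * sin (x/2) * sin (real N * x) = cos ((real N - 1/2) * x) - cos ((real (Suc N) - 1/2) * x)"
    by (simp add: cos_diff cos_add)
  then show ?case using Suc by simp
qed

lemma sum_sin_pi_div_mult_sin:
  assumes "p > 0"
  shows "(\<Sum>k<p. sin (pi * real k / real p)) * sin (pi / (2 * real p)) = cos (pi / (2 * real p))"
proof -
  have "(real p - 1/2) * (pi / real p) = pi - pi / (2 * real p)"
    using assms by (simp add: field_simps)
  then have "2 * ((\<Sum>k<p. sin (pi * real k / real p)) * sin (pi / (2 * real p)))
      = 2 * cos (pi / (2 * real p))"
    using sum_sin_mult_sin_telescope[of "pi / real p" p]
    by (simp add: sum_distrib_left sum_distrib_right mult_ac cos_diff)
  then show ?thesis by simp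
qed

lemma one_minus_le_cos:
  fixes y :: real
  assumes "0 \<le> y" "y \<le> 2"
  shows "1 - y \<le> cos y"
proof -
  have "(sin (y/2))\<^sup>2 = \<bar>sin (y/2)\<bar>\<^sup>2" by simp
  also have "\<dots> \<le> (y/2)\<^sup>2"
    using abs_sin_x_le_abs_x[of "y/2"] assms by (intro power_mono) auto
  finally have "(sin (y/2))\<^sup>2 \<le> (y/2)\<^sup>2" .
  moreover have "(y/2)\<^sup>2 * 2 \<le> y" using assms mult_left_mono[of y 2 y] by (simp add: power2_eq_square)
  ultimately show ?thesis using cos_double_sin[of "y/2"] by simp
qed

lemma sum_sin_pi_div_ge:
  assumes "p \<ge> 2"
  shows "(\<Sum>k<p. sin (pi * real k / real p)) \<ge> 2 * real p / pi - 1"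
proof -
  define y where "y = pi / (2 * real p)"
  define S where "S = (\<Sum>k<p. sin (pi * real k / real p))"
  have y0: "0 < y" and y1: "y < 1" using assms pi_less_4 by (simp_all add: y_def field_simps)
  have "sin y > 0" using y0 y1 pi_gt3 by (intro sin_gt_zero) auto
  have "(1/y - 1) * sin y \<le> (1/y - 1) * y"
    using sin_x_le_x[of y] y0 y1 by (intro mult_left_mono) (auto simp: field_simps)
  also have "\<dots> = 1 - y" using y0 by (simp add: field_simps)
  also have "\<dots> \<le> cos y" using one_minus_le_cos[of y] y0 y1 by simp
  also have "\<dots> = S * sin y" using sum_sin_pi_div_mult_sin[of p] assms by (simp add: S_def y_def)
  finally have "1/y - 1 \<le> S" using \<open>sin y > 0\<close> by simp
  then show ?thesis by (simp add: S_def y_def)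
qed

lemma abs_sin_2pi_div_eq:
  "\<bar>sin (2 * pi * real r / real p)\<bar> = sin (pi * real ((2 * r) mod p) / real p)"
proof (cases "p = 0")
  case False
  have "real (2 * r) = real ((2 * r) mod p) + real ((2 * r) div p) * real p"
    by (metis div_mult_mod_eq of_nat_add of_nat_mult add.commute)
  then have shift: "2 * pi * real r / real p
      = pi * real ((2 * r) mod p) / real p + real ((2 * r) div p) * pi"
    using False by (simp add: field_simps)
  have "sin (pi * real ((2 * r) mod p) / real p) \<ge> 0"
    using False by (intro sin_ge_zero) (auto simp: field_simps less_imp_le)
  then show ?thesis unfolding shift sin_add_of_nat_mult_pi by (simp add: abs_mult)
qed simp

lemma bij_betw_double_mod:
  fixes p :: nat
  assumes "odd p"
  shows "bij_betw (\<lambda>r. (2 * r) mod p) {..<p} {..<p}"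
proof -
  have "inj_on (\<lambda>r. (2 * r) mod p) {..<p}"
  proof (rule inj_onI)
    fix r s assume rs: "r \<in> {..<p}" "s \<in> {..<p}" and "(2 * r) mod p = (2 * s) mod p"
    then have "[2 * r = 2 * s] (mod p)" by (simp add: cong_def)
    moreover have "coprime 2 p" using assms by simp
    ultimately have "[r = s] (mod p)" by (simp add: cong_mult_lcancel_nat)
    then show "r = s" using rs by (simp add: cong_def)
  qed
  moreover have "(\<lambda>r. (2 * r) mod p) ` {..<p} \<subseteq> {..<p}"
    using odd_pos[OF assms] by auto
  ultimately show ?thesis by (simp add: bij_betw_def endo_inj_surj)
qed

lemma sum_abs_sin_2pi_div:
  assumes "odd p"
  shows "(\<Sum>r<p. \<bar>sin (2 * pi * real r / real p)\<bar>) = (\<Sum>k<p. sin (pi * real k / real p))"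
  unfolding abs_sin_2pi_div_eq
  using sum.reindex_bij_betw[OF bij_betw_double_mod[OF assms], of "\<lambda>k. sin (pi * real k / real p)"]
  by simp

lemma average_q_p_le:
  assumes "odd p" "p > 1"
  shows "(\<Sum>r<p. q_p p (int r)) / real p \<le> 1/2 - 1/pi + 1/(2 * real p)"
proof -
  have "(\<Sum>r<p. q_p p (int r)) = (\<Sum>r<p. (1 - \<bar>sin (2 * pi * real r / real p)\<bar>) / 2)"
    by (intro sum.cong refl) (simp add: q_p_eq_abs_sin)
  also have "\<dots> = real p / 2 - (\<Sum>k<p. sin (pi * real k / real p)) / 2"
    using sum_abs_sin_2pi_div[OF assms(1)]
    by (simp add: sum_divide_distrib[symmetric] sum_subtractf)
  also have "\<dots> \<le> real p / 2 - (2 * real p / pi - 1) / 2"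
    using sum_sin_pi_div_ge[of p] assms(2) by simp
  finally show ?thesis
    using assms(2) by (simp add: divide_right_mono field_simps)
qed

section \<open>Binomial sums over the cube\<close>

lemma bij_betw_cube_Pow: "bij_betw (\<lambda>x. {i \<in> {0..<m}. x i = 1}) (cube m) (Pow {0..<m})"
proof (rule bij_betwI[where g = "\<lambda>A. restrict (\<lambda>i. if i \<in> A then 1 else 0) {0..<m}"])
  show "(\<lambda>A. restrict (\<lambda>i. if i \<in> A then 1 else 0) {0..<m}) \<in> Pow {0..<m} \<rightarrow> cube m"
    by (auto simp: cube_def)
  show "restrict (\<lambda>i. if i \<in> {i \<in> {0..<m}. x i = 1} then 1 else 0) {0..<m} = x" if "x \<in> cube m" for x
    using that by (force simp: cube_def PiE_iff extensional_def)
qed auto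

lemma sum_Pow_card:
  fixes f :: "nat \<Rightarrow> 'a::comm_semiring_1"
  assumes "finite S"
  shows "(\<Sum>A\<in>Pow S. f (card A)) = (\<Sum>k\<le>card S. of_nat (card S choose k) * f k)"
proof -
  have "(\<Sum>A\<in>Pow S. f (card A)) = (\<Sum>k\<le>card S. \<Sum>A\<in>{A. A \<in> Pow S \<and> card A = k}. f (card A))"
    using assms by (intro sum.group[symmetric]) (auto intro: card_mono)
  also have "\<dots> = (\<Sum>k\<le>card S. of_nat (card {A. A \<subseteq> S \<and> card A = k}) * f k)"
    by (intro sum.cong refl) (simp add: conj_commute)
  finally show ?thesis using n_subsets[OF assms] by simp
qed

lemma sum_cube_hamming_weight:
  fixes f :: "nat \<Rightarrow> 'a::comm_semiring_1"
  shows "(\<Sum>x\<in>cube m. f (hamming_weight m x)) = (\<Sum>k\<le>m. of_nat (m choose k) * f k)"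
  using sum.reindex_bij_betw[OF bij_betw_cube_Pow, of "\<lambda>A. f (card A)"]
    sum_Pow_card[of "{0..<m}" f]
  by (simp add: hamming_weight_def)

lemma card_cube: "card (cube m) = 2 ^ m"
  unfolding cube_def by (simp add: card_PiE numeral_2_eq_2)

section \<open>Filtering by roots of unity\<close>

definition unity_root :: "nat \<Rightarrow> complex" where
  "unity_root p = cis (2 * pi / real p)"

lemma unity_root_pow: "unity_root p ^ t = cis (real t * (2 * pi / real p))"
  unfolding unity_root_def by (rule Complex.DeMoivre)

lemma norm_unity_root [simp]: "norm (unity_root p) = 1"
  by (simp add: unity_root_def)

lemma unity_root_pow_eq_1_iff:
  assumes "p > 0"
  shows "unity_root p ^ t = 1 \<longleftrightarrow> p dvd t"
proof
  assume "unity_root p ^ t = 1"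
  then have "cos (real t * (2 * pi / real p)) = 1"
    by (metis unity_root_pow cis.sel(1) one_complex.sel(1))
  then obtain n :: int where "real t * (2 * pi / real p) = of_int n * 2 * pi"
    by (auto simp: cos_one_2pi_int)
  then have "real t = of_int n * real p" using assms by (simp add: field_simps)
  then have "int t = n * int p" by (metis of_int_eq_iff of_int_mult of_int_of_nat_eq)
  then show "p dvd t" by (metis dvd_triv_right int_dvd_int_iff)
next
  assume "p dvd t"
  then obtain c where "t = p * c" by blast
  then show "unity_root p ^ t = 1"
    using assms by (simp add: power_mult unity_root_pow)
qed

lemma sum_unity_root_pow:
  assumes "p > 0"
  shows "(\<Sum>j<p. unity_root p ^ (j * t)) = (if p dvd t then of_nat p else 0)"
proof -
  define z where "z = unity_root p ^ t"
  have sum: "(\<Sum>j<p. unity_root p ^ (j * t)) = (\<Sum>j<p. z ^ j)"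
    unfolding z_def by (intro sum.cong refl) (metis power_mult mult.commute)
  have "z ^ p = 1"
    using unity_root_pow_eq_1_iff[OF assms, of "t * p"] by (simp add: z_def power_mult)
  moreover have "z = 1 \<longleftrightarrow> p dvd t"
    unfolding z_def by (rule unity_root_pow_eq_1_iff[OF assms])
  ultimately show ?thesis
    unfolding sum by (cases "z = 1") (simp_all add: geometric_sum)
qed

lemma dvd_add_pred_mult_iff:
  fixes p :: nat
  assumes "r < p"
  shows "p dvd k + (p - 1) * r \<longleftrightarrow> k mod p = r"
proof -
  have shift: "k + (p - 1) * r + r = k + p * r" using assms by (cases p) (auto simp: algebra_simps)
  have "p dvd k + (p - 1) * r \<longleftrightarrow> (k + (p - 1) * r + r) mod p = r mod p"
    using mod_eq_dvd_iff_nat[of r "k + (p - 1) * r + r" p] by simp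
  also have "\<dots> \<longleftrightarrow> k mod p = r"
    unfolding shift using assms by simp
  finally show ?thesis .
qed

text \<open>The exponent \<open>(p - 1) * r\<close> stands for \<open>-r\<close> modulo \<open>p\<close>, avoiding negative powers.\<close>

definition fourier_coeff :: "nat \<Rightarrow> (nat \<Rightarrow> real) \<Rightarrow> nat \<Rightarrow> complex" where
  "fourier_coeff p h j = (\<Sum>r<p. of_real (h r) * unity_root p ^ (j * ((p - 1) * r)))"

lemma norm_fourier_coeff_le:
  assumes "\<And>k. \<bar>h k\<bar> \<le> 1"
  shows "norm (fourier_coeff p h j) \<le> real p"
proof -
  have "norm (fourier_coeff p h j) \<le> (\<Sum>r<p. norm (of_real (h r) * unity_root p ^ (j * ((p - 1) * r))))"
    unfolding fourier_coeff_def by (rule norm_sum)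
  also have "\<dots> \<le> (\<Sum>r<p. 1)"
    using assms by (intro sum_mono) (simp add: norm_mult norm_power)
  finally show ?thesis by simp
qed

lemma fourier_inversion:
  assumes "p > 0" and periodic: "\<And>k. h k = h (k mod p)"
  shows "of_real (h k) = (\<Sum>j<p. fourier_coeff p h j * (unity_root p ^ j) ^ k) / of_nat p"
proof -
  have "(\<Sum>j<p. fourier_coeff p h j * (unity_root p ^ j) ^ k)
      = (\<Sum>j<p. \<Sum>r<p. of_real (h r) * unity_root p ^ (j * (k + (p - 1) * r)))"
    unfolding fourier_coeff_def sum_distrib_right
    by (intro sum.cong refl) (simp add: mult.assoc power_mult[symmetric] power_add[symmetric] distrib_left add.commute)
  also have "\<dots> = (\<Sum>r<p. of_real (h r) * (\<Sum>j<p. unity_root p ^ (j * (k + (p - 1) * r))))"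
    by (subst sum.swap) (simp add: sum_distrib_left)
  also have "\<dots> = (\<Sum>r<p. if r = k mod p then of_real (h r) * of_nat p else 0)"
  proof (intro sum.cong refl)
    fix r assume "r \<in> {..<p}"
    then have "p dvd k + (p - 1) * r \<longleftrightarrow> k mod p = r" by (intro dvd_add_pred_mult_iff) simp
    then show "of_real (h r) * (\<Sum>j<p. unity_root p ^ (j * (k + (p - 1) * r)))
        = (if r = k mod p then of_real (h r) * of_nat p else 0)"
      by (auto simp: sum_unity_root_pow[OF assms(1)])
  qed
  also have "\<dots> = of_real (h k) * of_nat p"
    using assms by simp
  finally show ?thesis using assms(1) by simp
qed

lemma binomial_sum_periodic_eq:
  assumes "p > 0" and "\<And>k. h k = h (k mod p)"
  shows "of_real (\<Sum>k\<le>m. real (m choose k) * h k)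
    = (\<Sum>j<p. fourier_coeff p h j * (1 + unity_root p ^ j) ^ m) / of_nat p"
proof -
  have binomial: "(1 + z) ^ m = (\<Sum>k\<le>m. of_nat (m choose k) * z ^ k)" for z :: complex
    using binomial_ring[of z 1 m] by (simp add: add.commute)
  have "of_real (\<Sum>k\<le>m. real (m choose k) * h k)
      = (\<Sum>k\<le>m. of_nat (m choose k) * ((\<Sum>j<p. fourier_coeff p h j * (unity_root p ^ j) ^ k) / of_nat p))"
    by (simp add: fourier_inversion[where h = h, OF assms, symmetric])
  also have "\<dots> = (\<Sum>j<p. fourier_coeff p h j
      * (\<Sum>k\<le>m. of_nat (m choose k) * (unity_root p ^ j) ^ k)) / of_nat p"
    by (simp add: sum_divide_distrib sum_distrib_left mult_ac sum.swap[of _ "{..m}"])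
  finally show ?thesis by (simp only: binomial)
qed

lemma binomial_sum_periodic_le:
  assumes p: "p > 0" and periodic: "\<And>k. h k = h (k mod p)" and bounded: "\<And>k. \<bar>h k\<bar> \<le> 1"
    and root_bound: "\<And>j. 0 < j \<Longrightarrow> j < p \<Longrightarrow> norm (1 + unity_root p ^ j) \<le> B"
  shows "(\<Sum>k\<le>m. real (m choose k) * h k) \<le> 2 ^ m * (\<Sum>r<p. h r) / real p + real (p - 1) * B ^ m"
proof -
  define error where "error = (\<Sum>j\<in>{1..<p}. fourier_coeff p h j * (1 + unity_root p ^ j) ^ m)"
  have "{..<p} = insert 0 {1..<p}" using p by auto
  moreover have "fourier_coeff p h 0 = of_real (\<Sum>r<p. h r)"
    by (simp add: fourier_coeff_def)
  ultimately have "of_real (\<Sum>k\<le>m. real (m choose k) * h k)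
      = (of_real (2 ^ m * (\<Sum>r<p. h r)) + error) / of_nat p"
    unfolding binomial_sum_periodic_eq[where h = h, OF p periodic] error_def by (simp add: mult.commute)
  from arg_cong[OF this, of Re]
  have "(\<Sum>k\<le>m. real (m choose k) * h k) = (2 ^ m * (\<Sum>r<p. h r) + Re error) / real p"
    by (simp add: Re_divide_of_nat)
  then have "(\<Sum>k\<le>m. real (m choose k) * h k) - 2 ^ m * (\<Sum>r<p. h r) / real p = Re error / real p"
    by (simp add: add_divide_distrib)
  also have "\<dots> \<le> norm error / real p"
    by (intro divide_right_mono complex_Re_le_cmod) simp
  also have "norm error / real p \<le> real (p - 1) * B ^ m"
  proof -
    have "norm error \<le> (\<Sum>j\<in>{1..<p}. real p * B ^ m)"
      unfolding error_def
    proof (intro order_trans[OF norm_sum] sum_mono)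
      fix j assume "j \<in> {1..<p}"
      then show "norm (fourier_coeff p h j * (1 + unity_root p ^ j) ^ m) \<le> real p * B ^ m"
        unfolding norm_mult norm_power
        by (intro mult_mono power_mono norm_fourier_coeff_le root_bound bounded) auto
    qed
    then show ?thesis using p by (simp add: field_simps)
  qed
  finally show ?thesis by simp
qed
section \<open>Bounding the error terms\<close>

lemma norm_one_plus_cis: "norm (1 + cis t) = 2 * \<bar>cos (t/2)\<bar>"
proof -
  have "(norm (1 + cis t))\<^sup>2 = (1 + cos t)\<^sup>2 + (sin t)\<^sup>2" by (simp add: cmod_power2)
  also have "\<dots> = 2 + 2 * cos t" by (simp add: power2_eq_square algebra_simps)
  also have "\<dots> = (2 * \<bar>cos (t/2)\<bar>)\<^sup>2" using cos_double_cos[of "t/2"] by (simp add: power_mult_distrib)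
  finally show ?thesis by (rule power2_eq_imp_eq) simp_all
qed

lemma norm_one_plus_unity_root_pow_le:
  assumes "0 < j" "j < p"
  shows "norm (1 + unity_root p ^ j) \<le> 2 * cos (pi / real p)"
proof -
  have p: "real p > 0" using assms by simp
  have "cos (pi * real j / real p) \<le> cos (pi / real p)"
    using assms p by (intro cos_monotone_0_pi_le) (auto simp: field_simps)
  moreover have "- cos (pi * real j / real p) \<le> cos (pi / real p)"
  proof -
    have "pi * (real j + 1) \<le> pi * real p" using assms by (intro mult_left_mono) auto
    then have "cos (pi - pi * real j / real p) \<le> cos (pi / real p)"
      using p by (intro cos_monotone_0_pi_le) (auto simp: field_simps)
    then show ?thesis by simp
  qed
  moreover have "real j * (2 * pi / real p) / 2 = pi * real j / real p" by simp
  ultimately show ?thesis unfolding unity_root_pow norm_one_plus_cis by (simp add: abs_le_iff mult.commute)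
qed

lemma sin_ge_half_self:
  fixes y :: real
  assumes "0 \<le> y" "y \<le> 1"
  shows "y / 2 \<le> sin y"
proof -
  have "\<bar>sin y - (\<Sum>m<3. sin_coeff m * y ^ m)\<bar> \<le> inverse (fact 3) * \<bar>y\<bar> ^ 3"
    by (rule Maclaurin_sin_bound)
  moreover have "(\<Sum>m<3. sin_coeff m * y ^ m) = y"
    by (simp add: numeral_3_eq_3 sin_coeff_def)
  moreover have "y ^ 3 \<le> y"
    using assms mult_right_mono[OF mult_le_one[of y y] assms(1)] by (simp add: power3_eq_cube)
  then have "inverse (fact 3) * \<bar>y\<bar> ^ 3 \<le> y / 2"
    using assms by (simp add: fact_numeral)
  ultimately show ?thesis by linarith
qed

lemma cos_pi_div_nonneg:
  assumes "p \<ge> 2"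
  shows "0 \<le> cos (pi / real p)"
proof (rule cos_ge_zero)
  have "0 \<le> pi / real p" by simp
  then show "- (pi / 2) \<le> pi / real p" using pi_gt_zero by linarith
  show "pi / real p \<le> pi / 2" using assms by (intro divide_left_mono) auto
qed

lemma cos_pi_div_le_exp:
  assumes "p \<ge> 2"
  shows "cos (pi / real p) \<le> exp (- 1 / (real p)\<^sup>2)"
proof -
  define y where "y = pi / (2 * real p)"
  have y: "0 \<le> y" "y \<le> 1" using assms pi_less_4 by (auto simp: y_def field_simps)
  have "1 / (real p)\<^sup>2 \<le> 2 * (y/2)\<^sup>2"
  proof -
    have "pi\<^sup>2 \<ge> 8" using power_mono[of 3 pi 2] pi_gt3 by simp
    then show ?thesis using assms by (simp add: y_def power_divide power_mult_distrib field_simps)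
  qed
  also have "2 * (y/2)\<^sup>2 \<le> 2 * (sin y)\<^sup>2"
    using sin_ge_half_self[OF y] y by (simp add: power_mono)
  also have "2 * (sin y)\<^sup>2 = 1 - cos (pi / real p)"
    using cos_double_sin[of y] by (simp add: y_def)
  finally have "cos (pi / real p) \<le> 1 + (- 1 / (real p)\<^sup>2)" by simp
  also have "\<dots> \<le> exp (- 1 / (real p)\<^sup>2)" by (rule exp_ge_add_one_self)
  finally show ?thesis .
qed

lemma cos_pi_div_pow_pred_le:
  assumes "p \<ge> 2" "n \<ge> 1"
  shows "cos (pi / real p) ^ (n - 1) \<le> 3 * exp (- real n / (real p)\<^sup>2)"
proof -
  have "cos (pi / real p) ^ (n - 1) \<le> exp (- 1 / (real p)\<^sup>2) ^ (n - 1)"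
    using assms by (intro power_mono cos_pi_div_le_exp cos_pi_div_nonneg)
  also have "\<dots> = exp (1 / (real p)\<^sup>2) * exp (- real n / (real p)\<^sup>2)"
    using assms by (simp add: exp_of_nat_mult[symmetric] exp_add[symmetric] of_nat_diff field_simps)
  also have "\<dots> \<le> 3 * exp (- real n / (real p)\<^sup>2)"
  proof (intro mult_right_mono)
    have "exp (1 / (real p)\<^sup>2) \<le> exp 1" using assms by (simp add: field_simps)
    then show "exp (1 / (real p)\<^sup>2) \<le> 3" using exp_le by linarith
  qed simp
  finally show ?thesis .
qed

lemma expectation_q_p_le:
  assumes "odd p" "p > 1"
  shows "unif_cube_expectation m (\<lambda>x. q_p p (int (hamming_weight m x)))
    \<le> 1/2 - 1/pi + 1/(2 * real p) + real p * cos (pi / real p) ^ m"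
proof -
  define h where "h k = q_p p (int k)" for k
  have "(\<Sum>k\<le>m. real (m choose k) * h k)
      \<le> 2 ^ m * (\<Sum>r<p. h r) / real p + real (p - 1) * (2 * cos (pi / real p)) ^ m"
    using assms q_p_nonneg q_p_le_one
    by (intro binomial_sum_periodic_le)
       (auto simp: h_def q_p_mod[symmetric] abs_le_iff norm_one_plus_unity_root_pow_le)
  then have "(\<Sum>k\<le>m. real (m choose k) * h k) / 2 ^ m
      \<le> (\<Sum>r<p. h r) / real p + real (p - 1) * cos (pi / real p) ^ m"
    by (simp add: field_simps power_mult_distrib)
  also have "\<dots> \<le> 1/2 - 1/pi + 1/(2 * real p) + real p * cos (pi / real p) ^ m"
    using average_q_p_le[OF assms] cos_pi_div_nonneg[of p] assms
    by (intro add_mono mult_right_mono) (auto simp: h_def)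
  finally show ?thesis
    by (simp add: unif_cube_expectation_def card_cube h_def
        sum_cube_hamming_weight[of "\<lambda>k. q_p p (int k)"])
qed

theorem lemma4p3:
  shows "\<exists>C::real. \<forall>p n::nat. prime p \<and> odd p \<and> n \<ge> 2 \<longrightarrow>
     unif_cube_expectation (n - 1) (\<lambda>x. q_p p (int (hamming_weight (n - 1) x)))
       \<le> 1/2 - 1/pi + 1/(2 * real p) + C * real p powr (3/2) * exp (- real n / (real p)\<^sup>2)"
proof (intro exI[of _ 3] allI impI, elim conjE)
  fix p n :: nat
  assume "prime p" "odd p" "n \<ge> 2"
  then have p: "p \<ge> 2" using prime_ge_2_nat by blast
  have "real p * cos (pi / real p) ^ (n - 1) \<le> real p * (3 * exp (- real n / (real p)\<^sup>2))"
    using cos_pi_div_pow_pred_le[OF p] \<open>n \<ge> 2\<close> by (simp add: mult_left_mono)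
  also have "\<dots> \<le> real p powr (3/2) * (3 * exp (- real n / (real p)\<^sup>2))"
    using p powr_mono[of 1 "3/2" "real p"] by (intro mult_right_mono) auto
  finally show "unif_cube_expectation (n - 1) (\<lambda>x. q_p p (int (hamming_weight (n - 1) x)))
       \<le> 1/2 - 1/pi + 1/(2 * real p) + 3 * real p powr (3/2) * exp (- real n / (real p)\<^sup>2)"
    using expectation_q_p_le[OF \<open>odd p\<close>, of "n - 1"] p by (simp add: mult_ac)
qed

end
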